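(* Let $\Omega$ be a finite-dimensional vector space over a finite field, $n=|\Omega|$, let $G\le\mathrm{AGL}(\Omega)$ be an affine group containing all translations of $\Omega$, and let $K$ be a one-point stabilizer of $G$, $k=|K|$. Suppose that $4(k-1)\,\mathrm{Fix}(K)<n$. Then $b(\mathrm{Inv}(G))\le 2$. In particular, this holds whenever $4k(k-1)f<n$ where $f=\mathrm{fix}(K)$.
   Context: For a permutation $g$, $\mathrm{fix}(g)$ is the number of its fixed points; for a set $K$ of permutations, $\mathrm{fix}(K)=\max\{\mathrm{fix}(g):g\in K\setminus\{1\}\}$ and $\mathrm{Fix}(K)=\sum_{g\in K\setminus\{1\}}\mathrm{fix}(g)$. $\mathrm{Inv}(G)=(\Omega,S)$ where $S$ is the set of orbits of $G$ on $\Omega\times\Omega$; this is a coherent configuration (its relations are unions of elements of $S$, its fibers are sets $\Gamma$ with $\{(\gamma,\gamma):\gamma\in\Gamma\}\in S$). A set $B\subseteq\Omega$ is a base of a coherent configuration $\mathcal X$ if the smallest coherent configuration on $\Omega$ whose relations include those of $\mathcal X$ and in which every $\{\beta\}$, $\beta\in B$, is a fiber has only singleton basic relations; $b(\mathcal X)$ is the minimal size of a base. *)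

theory Defs
  imports Main "HOL.Vector_Spaces"
begin

definition fixpts :: "('a \<Rightarrow> 'a) \<Rightarrow> nat" where
  "fixpts g = card {x. g x = x}"

definition fix_max :: "('a \<Rightarrow> 'a) set \<Rightarrow> nat" where
  "fix_max K = Max (fixpts ` (K - {id}))"

definition Fix_sum :: "('a \<Rightarrow> 'a) set \<Rightarrow> nat" where
  "Fix_sum K = (\<Sum>g\<in>K - {id}. fixpts g)"

definition coherent_config :: "'a set \<Rightarrow> ('a \<times> 'a) set set \<Rightarrow> bool" where
  "coherent_config \<Omega> S \<longleftrightarrow>
     finite \<Omega> \<and>
     (\<forall>s\<in>S. s \<noteq> {}) \<and> \<Union>S = \<Omega> \<times> \<Omega> \<and>
     (\<forall>s\<in>S. \<forall>t\<in>S. s \<noteq> t \<longrightarrow> s \<inter> t = {}) \<and>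
     (\<exists>T\<subseteq>S. \<Union>T = Id_on \<Omega>) \<and>
     (\<forall>s\<in>S. s\<inverse> \<in> S) \<and>
     (\<forall>r\<in>S. \<forall>s\<in>S. \<forall>t\<in>S. \<forall>x y x' y'. (x, y) \<in> t \<longrightarrow> (x', y') \<in> t \<longrightarrow>
        card {z. (x, z) \<in> r \<and> (z, y) \<in> s} = card {z. (x', z) \<in> r \<and> (z, y') \<in> s})"

definition cc_relations :: "('a \<times> 'a) set set \<Rightarrow> ('a \<times> 'a) set set" where
  "cc_relations S = {\<Union>T | T. T \<subseteq> S}"

definition is_fiber :: "('a \<times> 'a) set set \<Rightarrow> 'a set \<Rightarrow> bool" where
  "is_fiber S \<Gamma> \<longleftrightarrow> {(\<gamma>, \<gamma>) | \<gamma>. \<gamma> \<in> \<Gamma>} \<in> S"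

(* The relations of the smallest coherent configuration on \<Omega> whose relations include
   those of S and in which every singleton {\<beta>}, \<beta> \<in> B, is a fiber:
   intersection of the relation sets of all such coherent configurations. *)
definition point_extension_relations ::
    "'a set \<Rightarrow> ('a \<times> 'a) set set \<Rightarrow> 'a set \<Rightarrow> ('a \<times> 'a) set set" where
  "point_extension_relations \<Omega> S B =
     \<Inter>{cc_relations T | T. coherent_config \<Omega> T \<and> cc_relations S \<subseteq> cc_relations T \<and>
                           (\<forall>\<beta>\<in>B. is_fiber T {\<beta>})}"

(* B is a base: the above smallest configuration has only singleton basic relations,
   i.e. every binary relation on \<Omega> is one of its relations *)
definition is_base :: "'a set \<Rightarrow> ('a \<times> 'a) set set \<Rightarrow> 'a set \<Rightarrow> bool" where
  "is_base \<Omega> S B \<longleftrightarrow> B \<subseteq> \<Omega> \<and> point_extension_relations \<Omega> S B = Pow (\<Omega> \<times> \<Omega>)"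

definition base_number :: "'a set \<Rightarrow> ('a \<times> 'a) set set \<Rightarrow> nat" where
  "base_number \<Omega> S = Min (card ` {B. is_base \<Omega> S B})"

definition orbits2 :: "'a set \<Rightarrow> ('a \<Rightarrow> 'a) set \<Rightarrow> ('a \<times> 'a) set set" where
  "orbits2 \<Omega> G = {(\<lambda>g. (g x, g y)) ` G | x y. x \<in> \<Omega> \<and> y \<in> \<Omega>}"

definition perm_group :: "('a \<Rightarrow> 'a) set \<Rightarrow> bool" where
  "perm_group G \<longleftrightarrow> (\<forall>g\<in>G. bij g) \<and> id \<in> G \<and>
     (\<forall>g\<in>G. \<forall>h\<in>G. g \<circ> h \<in> G) \<and> (\<forall>g\<in>G. inv g \<in> G)"

definition AGL :: "('f::field \<Rightarrow> 'v::ab_group_add \<Rightarrow> 'v) \<Rightarrow> ('v \<Rightarrow> 'v) set" where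
  "AGL scale = {f. \<exists>A b. Vector_Spaces.linear scale scale A \<and> bij A \<and> (\<forall>x. f x = A x + b)}"

definition stabilizer :: "('a \<Rightarrow> 'a) set \<Rightarrow> 'a \<Rightarrow> ('a \<Rightarrow> 'a) set" where
  "stabilizer G \<omega> = {g \<in> G. g \<omega> = \<omega>}"

end

theory Submission
  imports Defs
begin

text \<open>
  Let \<open>K\<close> be the stabiliser of \<open>\<omega>\<close>; since \<open>G\<close> contains the translations, the stabiliser of
  any point \<open>u\<close> acts on \<open>\<Omega>\<close> around \<open>u\<close> through the linear parts of \<open>K\<close>. Call \<open>z\<close> separated
  by \<open>\<alpha>, \<beta>\<close> if the orbits of \<open>z\<close> under the stabilisers of \<open>\<alpha>\<close> and of \<open>\<beta>\<close> meet only in \<open>z\<close>.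
  In any coherent configuration refining \<open>Inv(G)\<close> in which \<open>{\<alpha>}\<close> and \<open>{\<beta>}\<close> are fibers,
  two points of a common fiber lie in one orbit of the stabiliser of every singleton fiber;
  hence every separated point is a singleton fiber. Two distinct points \<open>z, w\<close> of a common fiber
  then lie in one orbit of the stabiliser of every separated point \<open>u\<close>, but such \<open>u\<close> solve
  \<open>u - L u = w - L z\<close> for some linear part \<open>L \<noteq> 1\<close>, so there are at most \<open>Fix(K)\<close> of them.
  So if more than \<open>Fix(K)\<close> points are separated, all fibers, hence all basic relations, are
  singletons and \<open>{\<alpha>, \<beta>}\<close> is a base. Finally, for fixed \<open>z\<close> at most \<open>(k - 1) Fix(K)\<close> points \<open>\<beta>\<close>
  fail to separate \<open>z\<close> together with \<open>\<alpha>\<close>, and double counting yields a good \<open>\<beta>\<close> once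
  \<open>k Fix(K) < n\<close>, which follows from \<open>4 (k - 1) Fix(K) < n\<close>.
\<close>

section \<open>Coherent configurations\<close>

definition same_fiber :: "('a \<times> 'a) set set \<Rightarrow> 'a \<Rightarrow> 'a \<Rightarrow> bool" where
  "same_fiber T x y \<longleftrightarrow> (\<exists>d\<in>T. (x, x) \<in> d \<and> (y, y) \<in> d)"

lemma is_fiber_singleton: "is_fiber T {u} \<longleftrightarrow> {(u, u)} \<in> T"
proof -
  have "{(\<gamma>, \<gamma>) | \<gamma>. \<gamma> \<in> {u}} = {(u, u)}" by auto
  thus ?thesis unfolding is_fiber_def by simp
qed

lemma coherent_configD:
  assumes "coherent_config \<Omega> T"
  shows "finite \<Omega>" and "\<Union>T = \<Omega> \<times> \<Omega>"
    and "\<forall>s\<in>T. \<forall>t\<in>T. s \<noteq> t \<longrightarrow> s \<inter> t = {}"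
    and "\<exists>T0\<subseteq>T. \<Union>T0 = Id_on \<Omega>"
    and "\<forall>s\<in>T. s\<inverse> \<in> T"
    and "\<forall>r\<in>T. \<forall>s\<in>T. \<forall>t\<in>T. \<forall>x y x' y'. (x, y) \<in> t \<longrightarrow> (x', y') \<in> t \<longrightarrow>
           card {z. (x, z) \<in> r \<and> (z, y) \<in> s} = card {z. (x', z) \<in> r \<and> (z, y') \<in> s}"
  using assms unfolding coherent_config_def by - (elim conjE, assumption)+

lemma coherent_config_disjoint:
  "coherent_config \<Omega> T \<Longrightarrow> s \<in> T \<Longrightarrow> t \<in> T \<Longrightarrow> p \<in> s \<Longrightarrow> p \<in> t \<Longrightarrow> s = t"
  using coherent_configD(3) by blast

lemma coherent_config_cover: "coherent_config \<Omega> T \<Longrightarrow> p \<in> \<Omega> \<times> \<Omega> \<Longrightarrow> \<exists>t\<in>T. p \<in> t"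
  using coherent_configD(2) by blast

lemma coherent_config_subset: "coherent_config \<Omega> T \<Longrightarrow> t \<in> T \<Longrightarrow> t \<subseteq> \<Omega> \<times> \<Omega>"
  using coherent_configD(2) by blast

lemma coherent_config_converse: "coherent_config \<Omega> T \<Longrightarrow> t \<in> T \<Longrightarrow> t\<inverse> \<in> T"
  using coherent_configD(5) by blast

lemma coherent_config_reflexive_subset_Id:
  assumes cc: "coherent_config \<Omega> T" and d: "d \<in> T" "(x, x) \<in> d"
  shows "d \<subseteq> Id"
proof -
  obtain T0 where T0: "T0 \<subseteq> T" "\<Union>T0 = Id_on \<Omega>" using coherent_configD(4)[OF cc] by blast
  have "x \<in> \<Omega>" using coherent_config_subset[OF cc d(1)] d(2) by blast
  then obtain d0 where "d0 \<in> T0" "(x, x) \<in> d0" using T0(2) by blast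
  hence "d \<subseteq> Id_on \<Omega>" using coherent_config_disjoint[OF cc] T0 d by blast
  thus ?thesis by (auto elim: Id_onE)
qed

lemma coherent_config_path_transfer:
  assumes cc: "coherent_config \<Omega> T" and "r \<in> T" "s \<in> T" "t \<in> T" "(x, y) \<in> t" "(x', y') \<in> t"
    and "(x, z) \<in> r" "(z, y) \<in> s"
  shows "\<exists>z'. (x', z') \<in> r \<and> (z', y') \<in> s"
proof -
  have "{z. (x, z) \<in> r \<and> (z, y) \<in> s} \<subseteq> \<Omega>"
    using coherent_config_subset[OF cc \<open>r \<in> T\<close>] by blast
  hence "finite {z. (x, z) \<in> r \<and> (z, y) \<in> s}" using coherent_configD(1)[OF cc] finite_subset by blast
  hence "card {z. (x, z) \<in> r \<and> (z, y) \<in> s} \<noteq> 0" using assms(7,8) by auto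
  moreover have "card {z. (x, z) \<in> r \<and> (z, y) \<in> s} = card {z. (x', z) \<in> r \<and> (z, y') \<in> s}"
    using coherent_configD(6)[OF cc] assms(2-6) by blast
  ultimately show ?thesis by (metis (mono_tags, lifting) card.empty Collect_empty_eq)
qed

lemma same_fiber_fst:
  assumes cc: "coherent_config \<Omega> T" and t: "t \<in> T" "(x, y) \<in> t" "(x', y') \<in> t"
  shows "same_fiber T x x'"
proof -
  have "(x, x) \<in> \<Omega> \<times> \<Omega>" using coherent_config_subset[OF cc t(1)] t(2) by blast
  then obtain d where d: "d \<in> T" "(x, x) \<in> d" using coherent_config_cover[OF cc] by auto
  obtain z where z: "(x', z) \<in> d" "(z, y') \<in> t"
    using coherent_config_path_transfer[OF cc d(1) t(1) t d(2) t(2)] by blast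
  have "z = x'" using coherent_config_reflexive_subset_Id[OF cc d] z by auto
  thus ?thesis using d z unfolding same_fiber_def by auto
qed

lemma same_fiber_snd:
  assumes cc: "coherent_config \<Omega> T" and t: "t \<in> T" "(x, y) \<in> t" "(x', y') \<in> t"
  shows "same_fiber T y y'"
proof -
  have "t\<inverse> \<in> T" using coherent_config_converse[OF cc t(1)] .
  thus ?thesis using same_fiber_fst[OF cc, of "t\<inverse>" y x y' x'] t by auto
qed

lemma basic_relation_eq_singleton:
  assumes cc: "coherent_config \<Omega> T" and t: "t \<in> T" "(x, y) \<in> t"
    and x: "\<And>x'. same_fiber T x x' \<Longrightarrow> x' = x" and y: "\<And>y'. same_fiber T y y' \<Longrightarrow> y' = y"
  shows "t = {(x, y)}"
proof -
  have "q = (x, y)" if "q \<in> t" for q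
  proof -
    obtain x' y' where q: "q = (x', y')" by (cases q)
    thus ?thesis using x[OF same_fiber_fst[OF cc t]] y[OF same_fiber_snd[OF cc t]] \<open>q \<in> t\<close> by blast
  qed
  thus ?thesis using t(2) by blast
qed

lemma singleton_fiber_row:
  assumes cc: "coherent_config \<Omega> T" and u: "{(u, u)} \<in> T" and t: "t \<in> T" "(u, x) \<in> t"
    and fiber: "same_fiber T x x'"
  shows "(u, x') \<in> t"
proof -
  obtain d where d: "d \<in> T" "(x, x) \<in> d" "(x', x') \<in> d"
    using fiber unfolding same_fiber_def by blast
  have "t\<inverse> \<in> T" using coherent_config_converse[OF cc t(1)] .
  from coherent_config_path_transfer[OF cc this t(1) d, of u]
  obtain z where z: "(x', z) \<in> t\<inverse>" "(z, x') \<in> t" using t by auto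
  obtain d' where d': "d' \<in> T" "(u, u) \<in> d'" "(z, z) \<in> d'"
    using same_fiber_fst[OF cc t(1) t(2) z(2)] unfolding same_fiber_def by blast
  have "d' = {(u, u)}" using coherent_config_disjoint[OF cc d'(1) u d'(2)] by simp
  thus ?thesis using d' z by auto
qed

lemma basic_relation_refines:
  assumes cc: "coherent_config \<Omega> T" and sub: "cc_relations S \<subseteq> cc_relations T"
    and "t \<in> T" "R \<in> S" "p \<in> t" "p \<in> R" "q \<in> t"
  shows "q \<in> R"
proof -
  have "R \<in> cc_relations T"
    using sub \<open>R \<in> S\<close> unfolding cc_relations_def by (blast intro: exI[of _ "{R}"])
  then obtain T1 where T1: "T1 \<subseteq> T" "R = \<Union>T1" unfolding cc_relations_def by blast
  then obtain t1 where "t1 \<in> T1" "p \<in> t1" using \<open>p \<in> R\<close> by blast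
  hence "t1 = t" using coherent_config_disjoint[OF cc] T1 assms(3,5) by blast
  thus ?thesis using T1 \<open>t1 \<in> T1\<close> \<open>q \<in> t\<close> by blast
qed

lemma is_base_if_fibers_singletons:
  assumes "\<And>T x y. coherent_config UNIV T \<Longrightarrow> cc_relations S \<subseteq> cc_relations T \<Longrightarrow>
      \<forall>\<beta>\<in>B. is_fiber T {\<beta>} \<Longrightarrow> same_fiber T x y \<Longrightarrow> x = y"
  shows "is_base UNIV S B"
proof -
  have "cc_relations T = UNIV"
    if T: "coherent_config UNIV T" "cc_relations S \<subseteq> cc_relations T" "\<forall>\<beta>\<in>B. is_fiber T {\<beta>}" for T
  proof -
    have singleton: "{(x, y)} \<in> T" for x y
    proof -
      obtain t where t: "t \<in> T" "(x, y) \<in> t" using coherent_config_cover[OF T(1), of "(x, y)"] by auto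
      have "t = {(x, y)}" using basic_relation_eq_singleton[OF T(1) t] assms[OF T] by metis
      thus ?thesis using t(1) by simp
    qed
    have "R \<in> cc_relations T" for R
      unfolding cc_relations_def using singleton by (intro CollectI exI[of _ "(\<lambda>p. {p}) ` R"]) auto
    thus ?thesis by blast
  qed
  thus ?thesis unfolding is_base_def point_extension_relations_def by auto
qed

lemma base_number_le_card:
  assumes "finite \<Omega>" "is_base \<Omega> S B"
  shows "base_number \<Omega> S \<le> card B"
proof -
  have "{B. is_base \<Omega> S B} \<subseteq> Pow \<Omega>" unfolding is_base_def by blast
  hence "finite {B. is_base \<Omega> S B}" using assms(1) by (meson finite_Pow_iff finite_subset)
  thus ?thesis unfolding base_number_def using assms(2) by (intro Min_le) auto
qed

section \<open>Two-orbits of a permutation group\<close>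

lemma orbits2_cover:
  assumes "id \<in> G"
  shows "\<exists>R\<in>orbits2 UNIV G. (x, y) \<in> R"
proof -
  have "(x, y) \<in> (\<lambda>g. (g x, g y)) ` G" by (rule image_eqI[of _ _ id]) (simp_all add: assms)
  moreover have "(\<lambda>g. (g x, g y)) ` G \<in> orbits2 UNIV G" unfolding orbits2_def by blast
  ultimately show ?thesis ..
qed

lemma orbits2_same_orbit:
  assumes pg: "perm_group G" and R: "R \<in> orbits2 \<Omega> G" "(u, y) \<in> R" "(u, y') \<in> R"
  shows "\<exists>g\<in>G. g u = u \<and> g y = y'"
proof -
  obtain x0 y0 where R': "R = (\<lambda>g. (g x0, g y0)) ` G" using R unfolding orbits2_def by blast
  obtain g1 where g1: "g1 \<in> G" "u = g1 x0" "y = g1 y0" using R(2) R' by auto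
  obtain g2 where g2: "g2 \<in> G" "u = g2 x0" "y' = g2 y0" using R(3) R' by auto
  have "bij g1" "inv g1 \<in> G" using pg g1 unfolding perm_group_def by blast+
  hence "g2 \<circ> inv g1 \<in> G" "inv g1 u = x0" "inv g1 y = y0"
    using pg g1 g2 unfolding perm_group_def by (auto simp: bij_is_inj inv_f_f)
  thus ?thesis using g2 by (intro bexI[of _ "g2 \<circ> inv g1"]) auto
qed

lemma same_fiber_stabilizer_orbit:
  assumes pg: "perm_group G" and cc: "coherent_config UNIV T"
    and sub: "cc_relations (orbits2 UNIV G) \<subseteq> cc_relations T"
    and u: "{(u, u)} \<in> T" and fiber: "same_fiber T y y'"
  shows "\<exists>g\<in>G. g u = u \<and> g y = y'"
proof -
  obtain t where t: "t \<in> T" "(u, y) \<in> t" using coherent_config_cover[OF cc, of "(u, y)"] by auto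
  have "(u, y') \<in> t" using singleton_fiber_row[OF cc u t fiber] .
  moreover have "id \<in> G" using pg unfolding perm_group_def by simp
  then obtain R where R: "R \<in> orbits2 UNIV G" "(u, y) \<in> R" using orbits2_cover[of G u y] by auto
  ultimately have "(u, y') \<in> R" using basic_relation_refines[OF cc sub t(1) R(1) t(2) R(2)] by blast
  thus ?thesis using orbits2_same_orbit[OF pg R] by blast
qed

section \<open>Orbits of point stabilisers of an affine group\<close>

definition centre_at :: "'v::ab_group_add \<Rightarrow> ('v \<Rightarrow> 'v) \<Rightarrow> 'v \<Rightarrow> 'v" where
  "centre_at \<omega> g x = g (x + \<omega>) - \<omega>"

text \<open>For \<open>Ls\<close> the linear parts of the stabiliser of a point, \<open>orbit_at Ls u z\<close> is the orbit
  of \<open>z\<close> under the stabiliser of \<open>u\<close>.\<close>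

definition orbit_at :: "('v::ab_group_add \<Rightarrow> 'v) set \<Rightarrow> 'v \<Rightarrow> 'v \<Rightarrow> 'v set" where
  "orbit_at Ls u z = (\<lambda>L. u + L (z - u)) ` Ls"

definition separated :: "('v::ab_group_add \<Rightarrow> 'v) set \<Rightarrow> 'v \<Rightarrow> 'v \<Rightarrow> 'v \<Rightarrow> bool" where
  "separated Ls \<alpha> \<beta> z \<longleftrightarrow> orbit_at Ls \<alpha> z \<inter> orbit_at Ls \<beta> z \<subseteq> {z}"

lemma centre_at_AGL_diff:
  assumes "g \<in> AGL scale" "g \<omega> = \<omega>"
  shows "centre_at \<omega> g (x - y) = centre_at \<omega> g x - centre_at \<omega> g y"
proof -
  obtain A b where A: "Vector_Spaces.linear scale scale A" "\<And>x. g x = A x + b"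
    using assms(1) unfolding AGL_def by blast
  have diff: "A (p - q) = A p - A q" for p q using A(1) by (metis linear_def module_hom.diff)
  have "centre_at \<omega> g x = A x" for x
  proof -
    have "A (x + \<omega>) = A x + A \<omega>" using diff[of "x + \<omega>" \<omega>] by (simp add: eq_diff_eq)
    hence "centre_at \<omega> g x = A x + (A \<omega> + b) - \<omega>" unfolding centre_at_def A(2) by (simp add: add.assoc)
    also have "A \<omega> + b = \<omega>" using A(2)[of \<omega>] assms(2) by simp
    finally show ?thesis by simp
  qed
  thus ?thesis using diff by simp
qed

lemma inj_centre_at: "inj (centre_at \<omega>)"
proof (rule injI)
  fix g g' assume "centre_at \<omega> g = centre_at \<omega> g'"
  hence "centre_at \<omega> g (z - \<omega>) = centre_at \<omega> g' (z - \<omega>)" for z by simp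
  thus "g = g'" unfolding centre_at_def by fastforce
qed

lemma centre_at_id [simp]: "centre_at \<omega> id = id"
  by (simp add: centre_at_def fun_eq_iff)

lemma fixpts_centre_at [simp]: "fixpts (centre_at \<omega> g) = fixpts g"
proof -
  have "{x. centre_at \<omega> g x = x} = (\<lambda>x. x - \<omega>) ` {x. g x = x}"
  proof (intro equalityI subsetI)
    fix x assume "x \<in> {x. centre_at \<omega> g x = x}"
    hence "g (x + \<omega>) = x + \<omega>" unfolding centre_at_def by (simp add: diff_eq_eq)
    thus "x \<in> (\<lambda>x. x - \<omega>) ` {x. g x = x}" by (intro image_eqI[of _ _ "x + \<omega>"]) simp_all
  qed (auto simp: centre_at_def)
  moreover have "inj (\<lambda>x::'a. x - \<omega>)" by (simp add: inj_on_def)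
  ultimately show ?thesis unfolding fixpts_def by (simp add: card_image inj_on_subset)
qed

lemma centre_at_image_minus_id: "centre_at \<omega> ` K - {id} = centre_at \<omega> ` (K - {id})"
  using image_set_diff[OF inj_centre_at, of \<omega> K "{id}"] by simp

lemma Fix_sum_centre_at: "Fix_sum (centre_at \<omega> ` K) = Fix_sum K"
  unfolding Fix_sum_def centre_at_image_minus_id
  using sum.reindex[OF inj_on_subset[OF inj_centre_at subset_UNIV], of fixpts] by simp

lemma centre_at_stabilizer_diff:
  assumes "G \<subseteq> AGL scale" and "L \<in> centre_at \<omega> ` stabilizer G \<omega>"
  shows "L (x - y) = L x - L y"
  using assms centre_at_AGL_diff unfolding stabilizer_def by blast

lemma card_centre_at_image: "card (centre_at \<omega> ` K) = card K"
  using card_image[OF inj_on_subset[OF inj_centre_at subset_UNIV]] .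

lemma stabilizer_image_in_orbit_at:
  assumes pg: "perm_group G" and tr: "\<forall>b. (\<lambda>x. x + b) \<in> G"
    and g: "g \<in> G" "g u = u"
  shows "g y \<in> orbit_at (centre_at \<omega> ` stabilizer G \<omega>) u y"
proof -
  define h where "h = (\<lambda>x. x + (\<omega> - u)) \<circ> g \<circ> (\<lambda>x. x + (u - \<omega>))"
  have "h \<in> stabilizer G \<omega>"
    using pg tr g unfolding h_def stabilizer_def perm_group_def by simp
  moreover have "g y = u + centre_at \<omega> h (y - u)"
    unfolding h_def centre_at_def by (simp add: algebra_simps)
  ultimately show ?thesis unfolding orbit_at_def by blast
qed

section \<open>Counting solutions of affine equations\<close>

lemma card_solutions_le_fixpts:
  fixes L :: "'v::{ab_group_add,finite} \<Rightarrow> 'v"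
  assumes diff: "\<And>x y. L (x - y) = L x - L y"
  shows "card {u. u - L u = c} \<le> fixpts L"
proof (cases "{u. u - L u = c} = {}")
  case False
  then obtain u0 where u0: "u0 - L u0 = c" by auto
  have solution: "L v = v - c" if "v - L v = c" for v
  proof -
    have "L v = v - (v - L v)" by simp
    thus ?thesis by (simp only: that)
  qed
  have "L (u - u0) = u - u0" if "u - L u = c" for u
    using diff solution[OF that] solution[OF u0] by simp
  hence "(\<lambda>u. u - u0) ` {u. u - L u = c} \<subseteq> {x. L x = x}" by blast
  moreover have "inj_on (\<lambda>u. u - u0) {u. u - L u = c}" by (auto simp: inj_on_def)
  ultimately show ?thesis unfolding fixpts_def by (metis card_inj_on_le finite)
qed simp

lemma card_centres_le_Fix_sum:
  fixes Ls :: "('v::{ab_group_add,finite} \<Rightarrow> 'v) set"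
  assumes diff: "\<And>L x y. L \<in> Ls \<Longrightarrow> L (x - y) = L x - L y" and "z \<noteq> w"
  shows "card {u. w \<in> orbit_at Ls u z} \<le> Fix_sum Ls"
proof -
  have "{u. w \<in> orbit_at Ls u z} \<subseteq> (\<Union>L\<in>Ls - {id}. {u. u - L u = w - L z})"
  proof
    fix u assume "u \<in> {u. w \<in> orbit_at Ls u z}"
    then obtain L where L: "L \<in> Ls" "w = u + L (z - u)" unfolding orbit_at_def by blast
    hence "L \<noteq> id" using \<open>z \<noteq> w\<close> by auto
    moreover have "u - L u = w - L z" using L diff[OF L(1)] by (simp add: algebra_simps)
    ultimately show "u \<in> (\<Union>L\<in>Ls - {id}. {u. u - L u = w - L z})" using L(1) by blast
  qed
  hence "card {u. w \<in> orbit_at Ls u z} \<le> card (\<Union>L\<in>Ls - {id}. {u. u - L u = w - L z})"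
    by (intro card_mono) auto
  also have "\<dots> \<le> (\<Sum>L\<in>Ls - {id}. card {u. u - L u = w - L z})"
    by (rule card_UN_le) auto
  also have "\<dots> \<le> Fix_sum Ls"
    unfolding Fix_sum_def by (intro sum_mono card_solutions_le_fixpts diff) auto
  finally show ?thesis .
qed

lemma card_non_separated_le:
  fixes Ls :: "('v::{ab_group_add,finite} \<Rightarrow> 'v) set"
  assumes diff: "\<And>L x y. L \<in> Ls \<Longrightarrow> L (x - y) = L x - L y"
  shows "card {\<beta>. \<not> separated Ls \<alpha> \<beta> z} \<le> card (Ls - {id}) * Fix_sum Ls"
proof -
  define P where "P L1 L2 = {\<beta>. \<beta> - L2 \<beta> = \<alpha> + L1 (z - \<alpha>) - L2 z}" for L1 L2 :: "'v \<Rightarrow> 'v"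
  have "{\<beta>. \<not> separated Ls \<alpha> \<beta> z} \<subseteq> (\<Union>L1\<in>Ls - {id}. \<Union>L2\<in>Ls - {id}. P L1 L2)"
  proof
    fix \<beta> assume "\<beta> \<in> {\<beta>. \<not> separated Ls \<alpha> \<beta> z}"
    then obtain L1 L2 where L: "L1 \<in> Ls" "L2 \<in> Ls" "\<alpha> + L1 (z - \<alpha>) \<noteq> z"
      "\<alpha> + L1 (z - \<alpha>) = \<beta> + L2 (z - \<beta>)"
      unfolding separated_def orbit_at_def by blast
    hence "L1 \<noteq> id" "L2 \<noteq> id" by auto
    moreover have "\<beta> \<in> P L1 L2" using L diff[OF L(2)] unfolding P_def by (simp add: algebra_simps)
    ultimately show "\<beta> \<in> (\<Union>L1\<in>Ls - {id}. \<Union>L2\<in>Ls - {id}. P L1 L2)" using L(1,2) by blast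
  qed
  hence "card {\<beta>. \<not> separated Ls \<alpha> \<beta> z} \<le> card (\<Union>L1\<in>Ls - {id}. \<Union>L2\<in>Ls - {id}. P L1 L2)"
    by (intro card_mono) auto
  also have "\<dots> \<le> (\<Sum>L1\<in>Ls - {id}. \<Sum>L2\<in>Ls - {id}. card (P L1 L2))"
    by (intro order.trans[OF card_UN_le] sum_mono card_UN_le) auto
  also have "\<dots> \<le> (\<Sum>L1\<in>Ls - {id}. Fix_sum Ls)"
    unfolding Fix_sum_def P_def by (intro sum_mono card_solutions_le_fixpts diff) auto
  finally show ?thesis by simp
qed

lemma sum_card_swap:
  "(\<Sum>x\<in>UNIV. card {y. P x y}) = (\<Sum>y\<in>UNIV. card {x::'a::finite. P x (y::'b::finite)})"
proof -
  have card_eq: "card {a. Q a} = (\<Sum>a\<in>UNIV. if Q a then 1 else 0)" for Q :: "'c::finite \<Rightarrow> bool"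
    using sum.inter_filter[of UNIV "\<lambda>_. 1::nat" Q] by simp
  have "(\<Sum>x\<in>UNIV. card {y. P x y}) = (\<Sum>x\<in>UNIV. \<Sum>y\<in>UNIV. if P x y then 1 else 0)"
    by (simp only: card_eq)
  also have "\<dots> = (\<Sum>y\<in>UNIV. \<Sum>x\<in>UNIV. if P x y then 1 else 0)" by (rule sum.swap)
  also have "\<dots> = (\<Sum>y\<in>UNIV. card {x. P x y})" by (simp only: card_eq)
  finally show ?thesis .
qed

lemma exists_separating_point:
  fixes Ls :: "('v::{ab_group_add,finite} \<Rightarrow> 'v) set"
  assumes diff: "\<And>L x y. L \<in> Ls \<Longrightarrow> L (x - y) = L x - L y"
    and "id \<in> Ls" and big: "card Ls * Fix_sum Ls < card (UNIV :: 'v set)"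
  shows "\<exists>\<beta>. Fix_sum Ls < card {z. separated Ls \<alpha> \<beta> z}"
proof (rule ccontr)
  define F m n where "F = Fix_sum Ls" and "m = card (Ls - {id})" and "n = card (UNIV :: 'v set)"
  have "0 < n" unfolding n_def by (simp add: finite_UNIV_card_ge_0)
  assume "\<not> ?thesis"
  hence "card {z. separated Ls \<alpha> \<beta> z} \<le> F" for \<beta> unfolding F_def by (simp add: not_less)
  hence "(\<Sum>\<beta>\<in>UNIV. card {z. separated Ls \<alpha> \<beta> z}) \<le> n * F"
    unfolding n_def
    using sum_bounded_above[where A = UNIV and f = "\<lambda>\<beta>. card {z. separated Ls \<alpha> \<beta> z}"] by simp
  moreover have "n - m * F \<le> card {\<beta>. separated Ls \<alpha> \<beta> z}" for z
  proof -
    have "{\<beta>. separated Ls \<alpha> \<beta> z} = UNIV - {\<beta>. \<not> separated Ls \<alpha> \<beta> z}" by blast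
    hence "card {\<beta>. separated Ls \<alpha> \<beta> z} = n - card {\<beta>. \<not> separated Ls \<alpha> \<beta> z}"
      unfolding n_def by (simp add: card_Diff_subset)
    thus ?thesis using diff_le_mono2[OF card_non_separated_le[OF diff]] unfolding m_def F_def by simp
  qed
  hence "n * (n - m * F) \<le> (\<Sum>z\<in>UNIV. card {\<beta>. separated Ls \<alpha> \<beta> z})"
    unfolding n_def
    using sum_bounded_below[where A = UNIV and f = "\<lambda>z. card {\<beta>. separated Ls \<alpha> \<beta> z}"] by simp
  ultimately have "n * (n - m * F) \<le> n * F" using sum_card_swap[of "separated Ls \<alpha>"] by linarith
  hence "n \<le> (m + 1) * F" using \<open>0 < n\<close> by simp
  also have "m + 1 = card Ls"
  proof -
    have "0 < card Ls" using \<open>id \<in> Ls\<close> card_gt_0_iff[of Ls] by auto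
    thus ?thesis using \<open>id \<in> Ls\<close> unfolding m_def by (simp add: card_Diff_singleton)
  qed
  finally show False using big unfolding F_def n_def by simp
qed

section \<open>A separating pair is a base\<close>

lemma same_fiber_eq_if_many_separated:
  fixes Ls :: "('v::{ab_group_add,finite} \<Rightarrow> 'v) set"
  assumes cc: "coherent_config UNIV T"
    and diff: "\<And>L x y. L \<in> Ls \<Longrightarrow> L (x - y) = L x - L y"
    and orbit: "\<And>u y y'. {(u, u)} \<in> T \<Longrightarrow> same_fiber T y y' \<Longrightarrow> y' \<in> orbit_at Ls u y"
    and fibers: "{(\<alpha>, \<alpha>)} \<in> T" "{(\<beta>, \<beta>)} \<in> T"
    and many: "Fix_sum Ls < card {z. separated Ls \<alpha> \<beta> z}"
    and "same_fiber T z w"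
  shows "z = w"
proof (rule ccontr)
  have singleton: "{(u, u)} \<in> T" if "separated Ls \<alpha> \<beta> u" for u
  proof -
    obtain d where d: "d \<in> T" "(u, u) \<in> d" using coherent_config_cover[OF cc, of "(u, u)"] by auto
    have "u' = u" if "same_fiber T u u'" for u'
      using orbit[OF fibers(1) that] orbit[OF fibers(2) that] \<open>separated Ls \<alpha> \<beta> u\<close>
      unfolding separated_def by blast
    hence "d = {(u, u)}" using basic_relation_eq_singleton[OF cc d] by blast
    thus ?thesis using d(1) by simp
  qed
  assume "z \<noteq> w"
  have "{u. separated Ls \<alpha> \<beta> u} \<subseteq> {u. w \<in> orbit_at Ls u z}"
    using orbit singleton \<open>same_fiber T z w\<close> by blast
  hence "card {u. separated Ls \<alpha> \<beta> u} \<le> Fix_sum Ls"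
    using card_centres_le_Fix_sum[OF diff \<open>z \<noteq> w\<close>] by (meson card_mono finite order.trans)
  thus False using many by simp
qed

lemma is_base_if_many_separated:
  fixes G :: "('v::{ab_group_add,finite} \<Rightarrow> 'v) set"
  assumes pg: "perm_group G" and affine: "G \<subseteq> AGL scale" and tr: "\<forall>b. (\<lambda>x. x + b) \<in> G"
    and many: "Fix_sum (stabilizer G \<omega>) < card {z. separated (centre_at \<omega> ` stabilizer G \<omega>) \<omega> \<beta> z}"
  shows "is_base UNIV (orbits2 UNIV G) {\<omega>, \<beta>}"
proof (rule is_base_if_fibers_singletons)
  fix T x y
  assume cc: "coherent_config UNIV T" and sub: "cc_relations (orbits2 UNIV G) \<subseteq> cc_relations T"
    and fibers: "\<forall>b\<in>{\<omega>, \<beta>}. is_fiber T {b}" and "same_fiber T x y"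
  define Ls where "Ls = centre_at \<omega> ` stabilizer G \<omega>"
  have diff: "\<And>L p q. L \<in> Ls \<Longrightarrow> L (p - q) = L p - L q"
    unfolding Ls_def using centre_at_stabilizer_diff[OF affine] .
  have orbit: "y' \<in> orbit_at Ls u y" if "{(u, u)} \<in> T" "same_fiber T y y'" for u y y'
    using same_fiber_stabilizer_orbit[OF pg cc sub that] stabilizer_image_in_orbit_at[OF pg tr]
    unfolding Ls_def by blast
  have "{(\<omega>, \<omega>)} \<in> T" "{(\<beta>, \<beta>)} \<in> T" using fibers by (simp_all add: is_fiber_singleton)
  moreover have "Fix_sum Ls < card {z. separated Ls \<omega> \<beta> z}"
    using many unfolding Ls_def Fix_sum_centre_at .
  ultimately show "x = y"
    using same_fiber_eq_if_many_separated[OF cc diff orbit] \<open>same_fiber T x y\<close> by blast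
qed

lemma base_number_le_two:
  fixes G :: "('v::{ab_group_add,finite} \<Rightarrow> 'v) set"
  assumes pg: "perm_group G" and affine: "G \<subseteq> AGL scale" and tr: "\<forall>b. (\<lambda>x. x + b) \<in> G"
    and small: "card (stabilizer G \<omega>) * Fix_sum (stabilizer G \<omega>) < card (UNIV :: 'v set)"
  shows "base_number UNIV (orbits2 UNIV G) \<le> 2"
proof -
  define Ls where "Ls = centre_at \<omega> ` stabilizer G \<omega>"
  have "id \<in> stabilizer G \<omega>" using pg unfolding perm_group_def stabilizer_def by simp
  hence "id \<in> Ls" unfolding Ls_def using centre_at_id by (metis imageI)
  moreover have "card Ls * Fix_sum Ls < card (UNIV :: 'v set)"
    using small unfolding Ls_def Fix_sum_centre_at card_centre_at_image .
  moreover have "\<And>L x y. L \<in> Ls \<Longrightarrow> L (x - y) = L x - L y"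
    unfolding Ls_def using centre_at_stabilizer_diff[OF affine] .
  ultimately obtain \<beta> where "Fix_sum Ls < card {z. separated Ls \<omega> \<beta> z}"
    using exists_separating_point by blast
  hence "Fix_sum (stabilizer G \<omega>) < card {z. separated Ls \<omega> \<beta> z}"
    unfolding Ls_def Fix_sum_centre_at .
  hence "is_base UNIV (orbits2 UNIV G) {\<omega>, \<beta>}"
    unfolding Ls_def by (rule is_base_if_many_separated[OF pg affine tr])
  hence "base_number UNIV (orbits2 UNIV G) \<le> card {\<omega>, \<beta>}" by (simp add: base_number_le_card)
  also have "\<dots> \<le> 2" by (simp add: card_insert_le_m1)
  finally show ?thesis .
qed

lemma Fix_sum_le_fix_max:
  fixes K :: "('a::finite \<Rightarrow> 'a) set"
  shows "Fix_sum K \<le> card (K - {id}) * fix_max K"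
  unfolding Fix_sum_def fix_max_def
  using sum_bounded_above[of "K - {id}" fixpts "Max (fixpts ` (K - {id}))"] by simp

theorem corollary8p2:
  fixes scale :: "'f::{field,finite} \<Rightarrow> 'v::{ab_group_add,finite} \<Rightarrow> 'v"
    and G :: "('v \<Rightarrow> 'v) set"
    and \<omega> :: 'v
  assumes "vector_space scale"
    and "perm_group G"
    and "G \<subseteq> AGL scale"
    and "\<forall>b. (\<lambda>x. x + b) \<in> G"
  shows "(4 * (card (stabilizer G \<omega>) - 1) * Fix_sum (stabilizer G \<omega>) < card (UNIV :: 'v set)
            \<longrightarrow> base_number UNIV (orbits2 UNIV G) \<le> 2)
       \<and> (4 * card (stabilizer G \<omega>) * (card (stabilizer G \<omega>) - 1) * fix_max (stabilizer G \<omega>)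
            < card (UNIV :: 'v set)
            \<longrightarrow> base_number UNIV (orbits2 UNIV G) \<le> 2)"
proof -
  define K k F where "K = stabilizer G \<omega>" and "k = card K" and "F = Fix_sum K"
  have "id \<in> K" using assms(2) unfolding K_def perm_group_def stabilizer_def by simp
  hence F_le: "F \<le> (k - 1) * fix_max K" using Fix_sum_le_fix_max[of K] unfolding k_def F_def by simp
  have "k * F \<le> 4 * (k - 1) * F"
  proof (cases "k \<le> 1")
    case True
    thus ?thesis using F_le by simp
  next
    case False
    thus ?thesis by (intro mult_le_mono1) arith
  qed
  moreover have "4 * (k - 1) * F \<le> 4 * k * (k - 1) * fix_max K"
  proof -
    have "(k - 1) * F \<le> k * ((k - 1) * fix_max K)" using F_le by (intro mult_le_mono) auto
    thus ?thesis by (simp add: mult.assoc)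
  qed
  ultimately show ?thesis
    using base_number_le_two[OF assms(2-4), of \<omega>] unfolding K_def k_def F_def by (meson le_less_trans)
qed

end
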